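(* Let $\mathcal{X}$ be a compact 2-dimensional Riemannian manifold embedded in $\mathbb{R}^3$, let $\{\phi_k\}_{k\in\mathbb{N}}$ be an orthonormal basis of $L^2(\mathcal{X})$ consisting of Laplace–Beltrami eigenfunctions ($\Delta\phi_k=\lambda_k\phi_k$, ordered by eigenvalue), and let $X\in L^2(\mathcal{X},\mathbb{R}^3)$ be the coordinate function of $\mathcal{X}$. For $\sigma>0$ and $K>0$ define the shell operator $$\mathcal{S}_K(X):=\sum_{k=1}^{\infty}\frac{1}{1+\exp\bigl(\sigma(k-K)\bigr)}\,\langle \phi_k, X\rangle_{L^2}\,\phi_k,$$ where $\langle\phi_k,X\rangle_{L^2}\in\mathbb{R}^3$ is taken componentwise. Then, whenever $\mathcal{S}_{K+1}(X)\neq 0$, $$\frac{\bigl\|\mathcal{S}_{K+1}(X)-\mathcal{S}_{K}(X)\bigr\|_{L^2}}{\bigl\|\mathcal{S}_{K+1}(X)\bigr\|_{L^2}}\leq|1-e^{-\sigma}|,$$ and $|1-e^{-\sigma}|=\mathcal{O}(\sigma)$ as $\sigma\to 0$.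
   Context: The $L^2$ norm of an $\mathbb{R}^3$-valued function is $\|f\|_{L^2}^2=\int_{\mathcal{X}}|f|^2$, with $|\cdot|$ the Euclidean norm. The parameter $\sigma$ is called the upsampling variance; $\mathcal{S}_K(X)$ is a smoothed version of the coordinate function obtained by sigmoid-weighted projection onto the Laplace–Beltrami eigenfunctions. *)

theory Defs
  imports "HOL-Analysis.Analysis" "HOL-Library.Landau_Symbols"
begin

definition L2norm :: "'a measure \<Rightarrow> ('a \<Rightarrow> 'b::real_normed_vector) \<Rightarrow> real" where
  "L2norm M f = sqrt (LINT x|M. (norm (f x))\<^sup>2)"

definition sq_integrable :: "'a measure \<Rightarrow> ('a \<Rightarrow> 'b::{real_normed_vector, second_countable_topology}) \<Rightarrow> bool" where
  "sq_integrable M f \<longleftrightarrow> f \<in> borel_measurable M \<and> integrable M (\<lambda>x. (norm (f x))\<^sup>2)"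

definition L2coef :: "'a measure \<Rightarrow> ('a \<Rightarrow> real) \<Rightarrow> ('a \<Rightarrow> 'b::{banach, second_countable_topology}) \<Rightarrow> 'b" where
  "L2coef M g f = (LINT x|M. g x *\<^sub>R f x)"

definition L2_orthonormal_basis :: "'a measure \<Rightarrow> (nat \<Rightarrow> 'a \<Rightarrow> real) \<Rightarrow> bool" where
  "L2_orthonormal_basis M \<phi> \<longleftrightarrow>
     (\<forall>k\<ge>1. sq_integrable M (\<phi> k)) \<and>
     (\<forall>i\<ge>1. \<forall>j\<ge>1. (LINT x|M. \<phi> i x * \<phi> j x) = (if i = j then 1 else 0)) \<and>
     (\<forall>f::'a \<Rightarrow> real. sq_integrable M f \<longrightarrow>
        (\<lambda>n. L2norm M (\<lambda>x. f x - (\<Sum>k\<in>{1..n}. L2coef M (\<phi> k) f * \<phi> k x))) \<longlonglongrightarrow> 0)"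

definition shell_weight :: "real \<Rightarrow> real \<Rightarrow> nat \<Rightarrow> real" where
  "shell_weight \<sigma> K k = 1 / (1 + exp (\<sigma> * (real k - K)))"

definition shell_partial ::
  "'a measure \<Rightarrow> (nat \<Rightarrow> 'a \<Rightarrow> real) \<Rightarrow> real \<Rightarrow> real \<Rightarrow> ('a \<Rightarrow> 'b::{banach, second_countable_topology}) \<Rightarrow> nat \<Rightarrow> 'a \<Rightarrow> 'b" where
  "shell_partial M \<phi> \<sigma> K X n = (\<lambda>x. \<Sum>k\<in>{1..n}. (shell_weight \<sigma> K k * \<phi> k x) *\<^sub>R L2coef M (\<phi> k) X)"

text \<open>S is (a representative of) the shell operator S_K(X): the L2 limit of the partial sums.\<close>
definition is_shell ::
  "'a measure \<Rightarrow> (nat \<Rightarrow> 'a \<Rightarrow> real) \<Rightarrow> real \<Rightarrow> real \<Rightarrow> ('a \<Rightarrow> 'b::{banach, second_countable_topology}) \<Rightarrow> ('a \<Rightarrow> 'b) \<Rightarrow> bool" where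
  "is_shell M \<phi> \<sigma> K X S \<longleftrightarrow> sq_integrable M S \<and>
     (\<lambda>n. L2norm M (\<lambda>x. S x - shell_partial M \<phi> \<sigma> K X n x)) \<longlonglongrightarrow> 0"

end

theory Submission
  imports Defs
begin

text \<open>Shifting the centre of the sigmoid from \<open>K\<close> to \<open>K + 1\<close> multiplies the denominator
  \<open>1 + exp (\<sigma> (k - K))\<close> of the weight \<open>w\<^sub>K(k)\<close> by a factor between \<open>exp (- \<sigma>)\<close> and \<open>1\<close>, so
  \<open>0 \<le> w\<^sub>K\<^sub>+\<^sub>1(k) - w\<^sub>K(k) \<le> (1 - exp (- \<sigma>)) w\<^sub>K\<^sub>+\<^sub>1(k)\<close> for every \<open>k\<close>. By orthonormality the
  squared \<open>L\<^sup>2\<close> norm of a finite combination \<open>\<Sum> a\<^sub>k \<phi>\<^sub>k c\<^sub>k\<close> is \<open>\<Sum> a\<^sub>k\<^sup>2 |c\<^sub>k|\<^sup>2\<close>, so this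
  coefficientwise bound gives the estimate for every pair of partial sums of the two shell
  operators, and Minkowski's inequality carries it over to their \<open>L\<^sup>2\<close> limits. Finally
  \<open>0 \<le> 1 - exp (- s) \<le> s\<close> for \<open>s > 0\<close>.\<close>

lemma shell_weight_pos: "0 < shell_weight \<sigma> K k"
  by (simp add: shell_weight_def add_pos_pos)

lemma shell_weight_mono:
  assumes "\<sigma> \<ge> 0" "K \<le> K'"
  shows "shell_weight \<sigma> K k \<le> shell_weight \<sigma> K' k"
  unfolding shell_weight_def
  using assms by (intro divide_left_mono add_left_mono) (auto intro!: mult_left_mono mult_pos_pos add_pos_pos)

lemma shell_weight_shift_ge:
  assumes "\<sigma> \<ge> 0" "d \<ge> 0"
  shows "exp (- (\<sigma> * d)) * shell_weight \<sigma> (K + d) k \<le> shell_weight \<sigma> K k"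
proof -
  define a where "a = exp (\<sigma> * (real k - (K + d)))"
  define E where "E = exp (\<sigma> * d)"
  have "a > 0" "E \<ge> 1"
    using assms by (auto simp: a_def E_def)
  have "shell_weight \<sigma> K k = 1 / (1 + a * E)"
    by (simp add: shell_weight_def a_def E_def flip: exp_add) (simp add: algebra_simps)
  moreover have "1 + a * E \<le> E * (1 + a)"
    using \<open>E \<ge> 1\<close> by (simp add: algebra_simps)
  ultimately have "1 / (E * (1 + a)) \<le> shell_weight \<sigma> K k"
    using \<open>a > 0\<close> \<open>E \<ge> 1\<close> by (simp add: frac_le add_pos_pos)
  moreover have "exp (- (\<sigma> * d)) * shell_weight \<sigma> (K + d) k = 1 / (E * (1 + a))"
    by (simp add: shell_weight_def a_def E_def exp_minus field_simps)
  ultimately show ?thesis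
    by simp
qed

lemma shell_weight_shift_diff_le:
  assumes "\<sigma> \<ge> 0"
  shows "\<bar>shell_weight \<sigma> (K + 1) k - shell_weight \<sigma> K k\<bar> \<le> (1 - exp (- \<sigma>)) * shell_weight \<sigma> (K + 1) k"
  using shell_weight_mono[OF assms, of K "K + 1" k] shell_weight_shift_ge[OF assms, of 1 K k]
  by (simp add: algebra_simps)

lemma shell_partial_diff:
  "shell_partial M \<phi> \<sigma> K' X n x - shell_partial M \<phi> \<sigma> K X n x =
   (\<Sum>k\<in>{1..n}. ((shell_weight \<sigma> K' k - shell_weight \<sigma> K k) * \<phi> k x) *\<^sub>R L2coef M (\<phi> k) X)"
  by (simp add: shell_partial_def left_diff_distrib scaleR_left_diff_distrib sum_subtractf)

lemma quadratic_nonneg_imp_le_sqrt: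
  fixes A B C :: real
  assumes nonneg: "\<And>t. 0 \<le> A + 2 * t * B + t\<^sup>2 * C" and "C \<ge> 0"
  shows "B \<le> sqrt A * sqrt C"
proof -
  have "A \<ge> 0"
    using nonneg[of 0] by simp
  consider "B \<le> 0" | "B > 0" "C = 0" | "B > 0" "C > 0"
    using \<open>C \<ge> 0\<close> by linarith
  then show ?thesis
  proof cases
    case 1
    then show ?thesis
      using \<open>A \<ge> 0\<close> \<open>C \<ge> 0\<close> by (metis order_trans mult_nonneg_nonneg real_sqrt_ge_zero)
  next
    case 2
    have "0 \<le> A + 2 * (- (A + 1) / (2 * B)) * B"
      using nonneg[of "- (A + 1) / (2 * B)"] \<open>C = 0\<close> by simp
    also have "\<dots> = -1"
      using \<open>B > 0\<close> by (simp add: field_simps)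
    finally show ?thesis
      by simp
  next
    case 3
    have "0 \<le> A + 2 * (- B / C) * B + (- B / C)\<^sup>2 * C"
      by (rule nonneg)
    also have "\<dots> = A - B\<^sup>2 / C"
      using \<open>C > 0\<close> by (simp add: field_simps power2_eq_square)
    finally have "B\<^sup>2 \<le> A * C"
      using \<open>C > 0\<close> by (simp add: field_simps)
    then have "sqrt (B\<^sup>2) \<le> sqrt (A * C)"
      by (rule real_sqrt_le_mono)
    then show ?thesis
      using \<open>B > 0\<close> by (simp add: real_sqrt_mult)
  qed
qed

lemma sq_integrable_add:
  fixes f g :: "'a \<Rightarrow> 'b::{real_normed_vector, second_countable_topology}"
  assumes "sq_integrable M f" "sq_integrable M g"
  shows "sq_integrable M (\<lambda>x. f x + g x)"
proof -
  have bound: "(norm (f x + g x))\<^sup>2 \<le> 2 * (norm (f x))\<^sup>2 + 2 * (norm (g x))\<^sup>2" for x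
  proof -
    have "(norm (f x + g x))\<^sup>2 \<le> (norm (f x) + norm (g x))\<^sup>2"
      by (simp add: power_mono norm_triangle_ineq)
    also have "\<dots> \<le> 2 * (norm (f x))\<^sup>2 + 2 * (norm (g x))\<^sup>2"
      using sum_squares_bound[of "norm (f x)" "norm (g x)"] by (simp add: power2_sum)
    finally show ?thesis .
  qed
  have meas: "(\<lambda>x. f x + g x) \<in> borel_measurable M"
    using assms unfolding sq_integrable_def by (intro borel_measurable_add) simp_all
  have "integrable M (\<lambda>x. 2 * (norm (f x))\<^sup>2 + 2 * (norm (g x))\<^sup>2)"
    using assms by (simp add: sq_integrable_def)
  then have "integrable M (\<lambda>x. (norm (f x + g x))\<^sup>2)"
    by (rule Bochner_Integration.integrable_bound) (use meas bound in simp_all)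
  then show ?thesis
    using meas by (simp add: sq_integrable_def)
qed

lemma sq_integrable_scaleR:
  fixes f :: "'a \<Rightarrow> 'b::{real_normed_vector, second_countable_topology}"
  assumes "sq_integrable M f"
  shows "sq_integrable M (\<lambda>x. r *\<^sub>R f x)"
  using assms unfolding sq_integrable_def
  by (simp add: power_mult_distrib borel_measurable_scaleR[OF borel_measurable_const])

lemma sq_integrable_scaleR_const:
  fixes c :: "'b::{real_normed_vector, second_countable_topology}"
  assumes "sq_integrable M g"
  shows "sq_integrable M (\<lambda>x. g x *\<^sub>R c)"
  using assms unfolding sq_integrable_def
  by (simp add: power_mult_distrib borel_measurable_scaleR[OF _ borel_measurable_const])

lemma sq_integrable_diff:
  fixes f g :: "'a \<Rightarrow> 'b::{real_normed_vector, second_countable_topology}"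
  assumes "sq_integrable M f" "sq_integrable M g"
  shows "sq_integrable M (\<lambda>x. f x - g x)"
  using sq_integrable_add[OF assms(1) sq_integrable_scaleR[OF assms(2), of "-1"]] by simp

lemma sq_integrable_sum:
  fixes f :: "'i \<Rightarrow> 'a \<Rightarrow> 'b::{real_normed_vector, second_countable_topology}"
  assumes "\<And>k. k \<in> I \<Longrightarrow> sq_integrable M (f k)"
  shows "sq_integrable M (\<lambda>x. \<Sum>k\<in>I. f k x)"
  using assms
proof (induction I rule: infinite_finite_induct)
  case (insert k F)
  then show ?case
    by (simp add: sq_integrable_add)
qed (simp_all add: sq_integrable_def)

lemma integrable_inner_sq_integrable:
  fixes f g :: "'a \<Rightarrow> 'b::{real_inner, second_countable_topology}"
  assumes "sq_integrable M f" "sq_integrable M g"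
  shows "integrable M (\<lambda>x. f x \<bullet> g x)"
proof -
  have bound: "norm (f x \<bullet> g x) \<le> (norm (f x))\<^sup>2 + (norm (g x))\<^sup>2" for x
    using Cauchy_Schwarz_ineq2[of "f x" "g x"] sum_squares_bound[of "norm (f x)" "norm (g x)"]
    by simp
  have meas: "(\<lambda>x. f x \<bullet> g x) \<in> borel_measurable M"
    using assms unfolding sq_integrable_def by (intro borel_measurable_inner) simp_all
  have "integrable M (\<lambda>x. (norm (f x))\<^sup>2 + (norm (g x))\<^sup>2)"
    using assms by (simp add: sq_integrable_def)
  then show ?thesis
    by (rule Bochner_Integration.integrable_bound) (use meas bound in simp_all)
qed

lemma L2norm_nonneg: "L2norm M f \<ge> 0"
  by (simp add: L2norm_def integral_nonneg_AE)

lemma L2norm_power2: "(L2norm M f)\<^sup>2 = (LINT x|M. (norm (f x))\<^sup>2)"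
  by (simp add: L2norm_def integral_nonneg_AE)

lemma L2norm_diff_commute: "L2norm M (\<lambda>x. f x - g x) = L2norm M (\<lambda>x. g x - f x)"
  by (simp add: L2norm_def norm_minus_commute)

lemma integral_norm_add_power2:
  fixes f g :: "'a \<Rightarrow> 'b::{real_inner, second_countable_topology}"
  assumes "sq_integrable M f" "sq_integrable M g"
  shows "(LINT x|M. (norm (f x + g x))\<^sup>2) =
    (LINT x|M. (norm (f x))\<^sup>2) + 2 * (LINT x|M. f x \<bullet> g x) + (LINT x|M. (norm (g x))\<^sup>2)"
proof -
  have "(\<lambda>x. (norm (f x + g x))\<^sup>2) = (\<lambda>x. (norm (f x))\<^sup>2 + 2 * (f x \<bullet> g x) + (norm (g x))\<^sup>2)"
    by (simp add: power2_norm_eq_inner inner_add_left inner_add_right inner_commute algebra_simps)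
  then show ?thesis
    using assms integrable_inner_sq_integrable[OF assms] by (simp add: sq_integrable_def)
qed

lemma integral_inner_le_L2norm:
  fixes f g :: "'a \<Rightarrow> 'b::{real_inner, second_countable_topology}"
  assumes "sq_integrable M f" "sq_integrable M g"
  shows "(LINT x|M. f x \<bullet> g x) \<le> L2norm M f * L2norm M g"
proof -
  have "0 \<le> (LINT x|M. (norm (f x))\<^sup>2) + 2 * t * (LINT x|M. f x \<bullet> g x) + t\<^sup>2 * (LINT x|M. (norm (g x))\<^sup>2)"
    for t
    using integral_norm_add_power2[OF assms(1) sq_integrable_scaleR[OF assms(2), of t]]
      integral_nonneg_AE[of "\<lambda>x. (norm (f x + t *\<^sub>R g x))\<^sup>2" M]
    by (simp add: power_mult_distrib mult.assoc)
  then show ?thesis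
    unfolding L2norm_def by (rule quadratic_nonneg_imp_le_sqrt) (simp add: integral_nonneg_AE)
qed

lemma L2norm_triangle:
  fixes f g :: "'a \<Rightarrow> 'b::{real_inner, second_countable_topology}"
  assumes "sq_integrable M f" "sq_integrable M g"
  shows "L2norm M (\<lambda>x. f x + g x) \<le> L2norm M f + L2norm M g"
proof (rule power2_le_imp_le)
  show "(L2norm M (\<lambda>x. f x + g x))\<^sup>2 \<le> (L2norm M f + L2norm M g)\<^sup>2"
    using integral_norm_add_power2[OF assms] integral_inner_le_L2norm[OF assms]
    by (simp add: L2norm_power2 power2_sum)
qed (simp add: L2norm_nonneg add_nonneg_nonneg)

lemma L2norm_triangle_diff:
  fixes f g h :: "'a \<Rightarrow> 'b::{real_inner, second_countable_topology}"
  assumes "sq_integrable M f" "sq_integrable M g" "sq_integrable M h"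
  shows "L2norm M (\<lambda>x. f x - h x) \<le> L2norm M (\<lambda>x. f x - g x) + L2norm M (\<lambda>x. g x - h x)"
  using L2norm_triangle[OF sq_integrable_diff[OF assms(1,2)] sq_integrable_diff[OF assms(2,3)]]
  by simp

lemma sq_integrable_orthonormal_combination:
  fixes c :: "nat \<Rightarrow> 'b::{real_normed_vector, second_countable_topology}"
  assumes "L2_orthonormal_basis M \<phi>" "I \<subseteq> {1..}"
  shows "sq_integrable M (\<lambda>x. \<Sum>k\<in>I. (a k * \<phi> k x) *\<^sub>R c k)"
proof (intro sq_integrable_sum sq_integrable_scaleR_const)
  fix k
  assume "k \<in> I"
  then have "sq_integrable M (\<phi> k)"
    using assms by (auto simp: L2_orthonormal_basis_def)
  then show "sq_integrable M (\<lambda>x. a k * \<phi> k x)"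
    using sq_integrable_scaleR[of M "\<phi> k" "a k"] by simp
qed

lemma L2norm_orthonormal_combination:
  fixes c :: "nat \<Rightarrow> 'b::{real_inner, second_countable_topology}"
  assumes "L2_orthonormal_basis M \<phi>" "I \<subseteq> {1..}"
  shows "L2norm M (\<lambda>x. \<Sum>k\<in>I. (a k * \<phi> k x) *\<^sub>R c k) = sqrt (\<Sum>k\<in>I. (a k)\<^sup>2 * (norm (c k))\<^sup>2)"
proof -
  have orth: "(LINT x|M. \<phi> i x * \<phi> j x) = (if i = j then 1 else 0)"
    and int: "integrable M (\<lambda>x. \<phi> i x * \<phi> j x)" if "i \<in> I" "j \<in> I" for i j
    using assms(1) that subsetD[OF assms(2)] integrable_inner_sq_integrable[of M "\<phi> i" "\<phi> j"]
    by (auto simp: L2_orthonormal_basis_def)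
  have "(\<lambda>x. (norm (\<Sum>k\<in>I. (a k * \<phi> k x) *\<^sub>R c k))\<^sup>2) =
     (\<lambda>x. \<Sum>i\<in>I. \<Sum>j\<in>I. (a i * a j * (c i \<bullet> c j)) * (\<phi> i x * \<phi> j x))"
    unfolding power2_norm_eq_inner
    by (simp add: inner_sum_left inner_sum_right sum_distrib_left algebra_simps inner_commute)
  then have "(LINT x|M. (norm (\<Sum>k\<in>I. (a k * \<phi> k x) *\<^sub>R c k))\<^sup>2) =
      (\<Sum>i\<in>I. \<Sum>j\<in>I. (a i * a j * (c i \<bullet> c j)) * (LINT x|M. \<phi> i x * \<phi> j x))"
    using int by simp
  also have "\<dots> = (\<Sum>k\<in>I. (a k)\<^sup>2 * (norm (c k))\<^sup>2)"
    by (cases "finite I") (simp_all add: orth dot_square_norm power2_eq_square if_distrib cong: if_cong)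
  finally show ?thesis
    by (simp add: L2norm_def)
qed

lemma L2norm_orthonormal_combination_le:
  fixes c :: "nat \<Rightarrow> 'b::{real_inner, second_countable_topology}"
  assumes "L2_orthonormal_basis M \<phi>" "I \<subseteq> {1..}" "t \<ge> 0"
    and coeff_le: "\<And>k. k \<in> I \<Longrightarrow> \<bar>a k\<bar> \<le> t * \<bar>b k\<bar>"
  shows "L2norm M (\<lambda>x. \<Sum>k\<in>I. (a k * \<phi> k x) *\<^sub>R c k) \<le>
    t * L2norm M (\<lambda>x. \<Sum>k\<in>I. (b k * \<phi> k x) *\<^sub>R c k)"
proof -
  have "(a k)\<^sup>2 * (norm (c k))\<^sup>2 \<le> t\<^sup>2 * ((b k)\<^sup>2 * (norm (c k))\<^sup>2)" if "k \<in> I" for k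
    using power_mono[OF coeff_le[OF that] abs_ge_zero, of 2]
    by (simp add: mult_right_mono power_mult_distrib flip: mult.assoc)
  then have "sqrt (\<Sum>k\<in>I. (a k)\<^sup>2 * (norm (c k))\<^sup>2) \<le> sqrt (t\<^sup>2 * (\<Sum>k\<in>I. (b k)\<^sup>2 * (norm (c k))\<^sup>2))"
    by (simp add: sum_distrib_left sum_mono)
  then show ?thesis
    unfolding L2norm_orthonormal_combination[OF assms(1,2)]
    using \<open>t \<ge> 0\<close> by (simp add: real_sqrt_mult)
qed

lemma L2norm_shell_partial_shift_diff_le:
  fixes X :: "'a \<Rightarrow> 'b::{real_inner, banach, second_countable_topology}"
  assumes "L2_orthonormal_basis M \<phi>" "\<sigma> \<ge> 0"
  shows "L2norm M (\<lambda>x. shell_partial M \<phi> \<sigma> (K + 1) X n x - shell_partial M \<phi> \<sigma> K X n x)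
    \<le> (1 - exp (- \<sigma>)) * L2norm M (shell_partial M \<phi> \<sigma> (K + 1) X n)"
  unfolding shell_partial_diff
  unfolding shell_partial_def
  using assms shell_weight_shift_diff_le shell_weight_pos[THEN less_imp_le]
  by (intro L2norm_orthonormal_combination_le) auto

lemma L2norm_diff_le_of_approx:
  fixes F G :: "'a \<Rightarrow> 'b::{real_inner, second_countable_topology}" and f g :: "nat \<Rightarrow> 'a \<Rightarrow> 'b"
  assumes "sq_integrable M F" "sq_integrable M G" "\<And>n. sq_integrable M (f n)" "\<And>n. sq_integrable M (g n)"
    and F: "(\<lambda>n. L2norm M (\<lambda>x. F x - f n x)) \<longlonglongrightarrow> 0"
    and G: "(\<lambda>n. L2norm M (\<lambda>x. G x - g n x)) \<longlonglongrightarrow> 0"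
    and "t \<ge> 0" and approx_le: "\<And>n. L2norm M (\<lambda>x. f n x - g n x) \<le> t * L2norm M (f n)"
  shows "L2norm M (\<lambda>x. F x - G x) \<le> t * L2norm M F"
proof -
  have bound: "L2norm M (\<lambda>x. F x - G x)
      \<le> t * L2norm M F + ((1 + t) * L2norm M (\<lambda>x. F x - f n x) + L2norm M (\<lambda>x. G x - g n x))" for n
  proof -
    have triangle: "L2norm M (\<lambda>x. F x - G x)
        \<le> L2norm M (\<lambda>x. F x - f n x) + L2norm M (\<lambda>x. f n x - g n x) + L2norm M (\<lambda>x. G x - g n x)"
      using L2norm_triangle_diff[of M F "f n" G] L2norm_triangle_diff[of M "f n" "g n" G] assms(1-4)
        L2norm_diff_commute[of M "g n" G]
      by simp
    have "L2norm M (f n) \<le> L2norm M (\<lambda>x. F x - f n x) + L2norm M F"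
      using L2norm_triangle[OF sq_integrable_diff[OF assms(3)[of n] assms(1)] assms(1)]
        L2norm_diff_commute[of M "f n" F]
      by simp
    then have "t * L2norm M (f n) \<le> t * L2norm M (\<lambda>x. F x - f n x) + t * L2norm M F"
      using mult_left_mono \<open>t \<ge> 0\<close> by (fastforce simp flip: distrib_left)
    then show ?thesis
      using triangle approx_le[of n] unfolding distrib_right mult_1 by linarith
  qed
  have "(\<lambda>n. t * L2norm M F + ((1 + t) * L2norm M (\<lambda>x. F x - f n x) + L2norm M (\<lambda>x. G x - g n x)))
      \<longlonglongrightarrow> t * L2norm M F + ((1 + t) * 0 + 0)"
    by (intro tendsto_intros F G)
  then show ?thesis
    using LIMSEQ_le_const bound by fastforce
qed

lemma abs_one_minus_exp_minus_bigo: "(\<lambda>s::real. \<bar>1 - exp (- s)\<bar>) \<in> O[at_right 0](\<lambda>s. s)"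
proof (rule bigoI[where c = 1])
  show "\<forall>\<^sub>F s in at_right (0::real). norm \<bar>1 - exp (- s)\<bar> \<le> 1 * norm s"
    using eventually_at_right_less[of "0::real"]
  proof (rule eventually_mono)
    fix s :: real
    assume "0 < s"
    then show "norm \<bar>1 - exp (- s)\<bar> \<le> 1 * norm s"
      using exp_ge_add_one_self[of "- s"] by simp
  qed
qed

theorem theorem1:
  fixes M :: "(real^3) measure" and \<phi> :: "nat \<Rightarrow> real^3 \<Rightarrow> real"
    and \<sigma> K :: real and S0 S1 :: "real^3 \<Rightarrow> real^3"
  assumes "finite_measure M"
    and "compact (space M)"
    and "sets M = sets (restrict_space lborel (space M))"
    and "L2_orthonormal_basis M \<phi>"
    and "\<sigma> > 0" and "K > 0"
    and "is_shell M \<phi> \<sigma> K (\<lambda>p. p) S0"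
    and "is_shell M \<phi> \<sigma> (K + 1) (\<lambda>p. p) S1"
    and "L2norm M S1 \<noteq> 0"
  shows "L2norm M (\<lambda>x. S1 x - S0 x) / L2norm M S1 \<le> \<bar>1 - exp (- \<sigma>)\<bar>
         \<and> (\<lambda>s::real. \<bar>1 - exp (- s)\<bar>) \<in> O[at_right 0](\<lambda>s. s)"
proof
  have "L2norm M (\<lambda>x. S1 x - S0 x) \<le> (1 - exp (- \<sigma>)) * L2norm M S1"
  proof (rule L2norm_diff_le_of_approx)
    show "L2norm M (\<lambda>x. shell_partial M \<phi> \<sigma> (K + 1) (\<lambda>p. p) n x - shell_partial M \<phi> \<sigma> K (\<lambda>p. p) n x)
        \<le> (1 - exp (- \<sigma>)) * L2norm M (shell_partial M \<phi> \<sigma> (K + 1) (\<lambda>p. p) n)" for n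
      using assms(4,5) by (intro L2norm_shell_partial_shift_diff_le) simp_all
  qed (use assms(4,5,7,8) in \<open>auto simp: is_shell_def shell_partial_def
         intro: sq_integrable_orthonormal_combination\<close>)
  moreover have "L2norm M S1 > 0"
    using assms(9) L2norm_nonneg[of M S1] by linarith
  ultimately show "L2norm M (\<lambda>x. S1 x - S0 x) / L2norm M S1 \<le> \<bar>1 - exp (- \<sigma>)\<bar>"
    using assms(5) by (simp add: divide_le_eq)
qed (rule abs_one_minus_exp_minus_bigo)

end
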